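(* Consider a feasible solution of a division and assignment problem $(T; \{U_1,\dots,U_p\}, V)$ in which $V$ has $v$ columns, together with a value-preserving bijection between the entry positions of $T$ and the entry positions of $U_1,\dots,U_p,V$. If $(A,B)$ is an inseparable $(T,V)$-pair with $a = |A|$ and $b = |B|$, then $a \le (v-1)b + 1$.
   Context: A division and assignment problem $(T;\{U_1,\dots,U_p\},V)$ consists of matrices $T$ (supply matrix) and $U_1,\dots,U_p,V$ (demand matrices), each with prescribed dimensions and prescribed common row sum per matrix; a feasible solution fills all matrices with real numbers so that all row sums are met and the multiset of entries of $T$ equals the multiset union of the entries of $U_1,\dots,U_p,V$. Fix such a solution together with a bijection $\phi$ from the entry positions of $U_1,\dots,U_p,V$ onto the entry positions of $T$ preserving values; an entry of $V$ is said to lie in the row of $T$ containing its image under $\phi$. A $(T,V)$-pair is a pair $(A,B)$ where $A$ is a set of rows of $T$ and $B$ is a set of rows of $V$ such that every entry of every row in $B$ lies in a row of $A$, and every row of $A$ contains at least one entry of a row of $B$. A $(T,V)$-pair $(A,B)$ is inseparable if there do not exist $(T,V)$-pairs $(A_1,B_1)$ and $(A_2,B_2)$ with $A_1\cap A_2=\emptyset$, $A_1\cup A_2=A$, $B_1\cap B_2=\emptyset$, $B_1\cup B_2 = B$. *)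

theory Defs
  imports Complex_Main "HOL-Library.Multiset"
begin

text \<open>Matrices are functions nat => nat => real together with explicit dimensions.
  The demand matrices U_q (q < p) have mU q rows, nU q columns, common row sum sU q
  (they are given as one function U q i j).
  Entry positions of the demand matrices are encoded as
  Inl (q, i, j) for entry (i,j) of U_q and Inr (k, l) for entry (k,l) of V.\<close>

type_synonym dpos = "(nat \<times> nat \<times> nat) + (nat \<times> nat)"

definition T_positions :: "nat \<Rightarrow> nat \<Rightarrow> (nat \<times> nat) set" where
  "T_positions m n = {..<m} \<times> {..<n}"

definition D_positions :: "nat \<Rightarrow> (nat \<Rightarrow> nat) \<Rightarrow> (nat \<Rightarrow> nat) \<Rightarrow> nat \<Rightarrow> nat \<Rightarrow> dpos set" where
  "D_positions p mU nU mV v =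
     Inl ` {(q, i, j). q < p \<and> i < mU q \<and> j < nU q} \<union> Inr ` ({..<mV} \<times> {..<v})"

definition D_value :: "(nat \<Rightarrow> nat \<Rightarrow> nat \<Rightarrow> real) \<Rightarrow> (nat \<Rightarrow> nat \<Rightarrow> real) \<Rightarrow> dpos \<Rightarrow> real" where
  "D_value U V x = (case x of Inl (q, i, j) \<Rightarrow> U q i j | Inr (k, l) \<Rightarrow> V k l)"

definition feasible ::
  "nat \<Rightarrow> nat \<Rightarrow> real \<Rightarrow> (nat \<Rightarrow> nat \<Rightarrow> real) \<Rightarrow>
   nat \<Rightarrow> (nat \<Rightarrow> nat) \<Rightarrow> (nat \<Rightarrow> nat) \<Rightarrow> (nat \<Rightarrow> real) \<Rightarrow> (nat \<Rightarrow> nat \<Rightarrow> nat \<Rightarrow> real) \<Rightarrow>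
   nat \<Rightarrow> nat \<Rightarrow> real \<Rightarrow> (nat \<Rightarrow> nat \<Rightarrow> real) \<Rightarrow> bool" where
  "feasible m n t T p mU nU sU U mV v s V \<longleftrightarrow>
     (\<forall>i<m. (\<Sum>j<n. T i j) = t) \<and>
     (\<forall>q<p. \<forall>i<mU q. (\<Sum>j<nU q. U q i j) = sU q) \<and>
     (\<forall>k<mV. (\<Sum>l<v. V k l) = s) \<and>
     image_mset (\<lambda>(i, j). T i j) (mset_set (T_positions m n)) =
       image_mset (D_value U V) (mset_set (D_positions p mU nU mV v))"

definition value_bij ::
  "nat \<Rightarrow> nat \<Rightarrow> (nat \<Rightarrow> nat \<Rightarrow> real) \<Rightarrow> nat \<Rightarrow> (nat \<Rightarrow> nat) \<Rightarrow> (nat \<Rightarrow> nat) \<Rightarrow>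
   (nat \<Rightarrow> nat \<Rightarrow> nat \<Rightarrow> real) \<Rightarrow> nat \<Rightarrow> nat \<Rightarrow> (nat \<Rightarrow> nat \<Rightarrow> real) \<Rightarrow>
   (dpos \<Rightarrow> nat \<times> nat) \<Rightarrow> bool" where
  "value_bij m n T p mU nU U mV v V \<phi> \<longleftrightarrow>
     bij_betw \<phi> (D_positions p mU nU mV v) (T_positions m n) \<and>
     (\<forall>x \<in> D_positions p mU nU mV v. T (fst (\<phi> x)) (snd (\<phi> x)) = D_value U V x)"

definition Vrow_in_T :: "(dpos \<Rightarrow> nat \<times> nat) \<Rightarrow> nat \<Rightarrow> nat \<Rightarrow> nat" where
  "Vrow_in_T \<phi> k l = fst (\<phi> (Inr (k, l)))"

definition TV_pair :: "nat \<Rightarrow> nat \<Rightarrow> nat \<Rightarrow> (dpos \<Rightarrow> nat \<times> nat) \<Rightarrow> nat set \<Rightarrow> nat set \<Rightarrow> bool" where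
  "TV_pair m mV v \<phi> A B \<longleftrightarrow>
     A \<subseteq> {..<m} \<and> B \<subseteq> {..<mV} \<and>
     (\<forall>k\<in>B. \<forall>l<v. Vrow_in_T \<phi> k l \<in> A) \<and>
     (\<forall>i\<in>A. \<exists>k\<in>B. \<exists>l<v. Vrow_in_T \<phi> k l = i)"

text \<open>Inseparable: not a disjoint union of two nontrivial (T,V)-pairs
  (the parts are required to differ from the empty pair ({},{}), since otherwise
  every pair would split trivially).\<close>
definition inseparable :: "nat \<Rightarrow> nat \<Rightarrow> nat \<Rightarrow> (dpos \<Rightarrow> nat \<times> nat) \<Rightarrow> nat set \<Rightarrow> nat set \<Rightarrow> bool" where
  "inseparable m mV v \<phi> A B \<longleftrightarrow>
     TV_pair m mV v \<phi> A B \<and>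
     \<not> (\<exists>A1 B1 A2 B2.
          TV_pair m mV v \<phi> A1 B1 \<and> TV_pair m mV v \<phi> A2 B2 \<and>
          (A1, B1) \<noteq> ({}, {}) \<and> (A2, B2) \<noteq> ({}, {}) \<and>
          A1 \<inter> A2 = {} \<and> A1 \<union> A2 = A \<and> B1 \<inter> B2 = {} \<and> B1 \<union> B2 = B)"

end

theory Submission
  imports Defs
begin

text \<open>Each row k of V meets a set R k of at most v rows of T, and a (T,V)-pair (A,B) has
  A equal to the union of the R k over k in B. Inseparability says exactly that the
  hypergraph with the edges R k (k in B) is connected, so these edges can be added one
  at a time, each new edge meeting the union of the earlier ones; every step therefore
  adds at most v - 1 new rows of T. Neither feasibility nor the value-preserving
  bijectivity of \<phi> is needed.\<close>

definition overlap_connected :: "('b \<Rightarrow> 'a set) \<Rightarrow> 'b set \<Rightarrow> bool" where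
  "overlap_connected R B \<longleftrightarrow>
     (\<forall>S\<subseteq>B. (\<Union>k\<in>S. R k) \<inter> (\<Union>k\<in>B - S. R k) = {} \<longrightarrow> S = {} \<or> S = B)"

lemma overlap_connectedE:
  assumes "overlap_connected R B" "S \<subseteq> B" "S \<noteq> {}" "S \<noteq> B"
  obtains k where "k \<in> B - S" "R k \<inter> (\<Union>j\<in>S. R j) \<noteq> {}"
proof -
  have "(\<Union>k\<in>S. R k) \<inter> (\<Union>k\<in>B - S. R k) \<noteq> {}"
    using assms unfolding overlap_connected_def by auto
  then show thesis
    using that by auto
qed

lemma card_Un_le_if_meets:
  assumes "finite X" "finite Y" "X \<inter> Y \<noteq> {}"
  shows "card (X \<union> Y) + 1 \<le> card X + card Y"
proof -
  have "card (X \<inter> Y) \<ge> 1"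
    using assms by (simp add: Suc_le_eq card_gt_0_iff)
  then show ?thesis
    using card_Un_Int[OF assms(1,2)] by linarith
qed

lemma card_UN_overlap_connected_grow:
  assumes conn: "overlap_connected R B" and "finite B"
    and fin: "\<And>k. k \<in> B \<Longrightarrow> finite (R k)"
    and card_le: "\<And>k. k \<in> B \<Longrightarrow> card (R k) \<le> v"
    and "1 \<le> n" "n \<le> card B"
  shows "\<exists>S\<subseteq>B. card S = n \<and> card (\<Union>k\<in>S. R k) + n \<le> v * n + 1"
  using \<open>1 \<le> n\<close> \<open>n \<le> card B\<close>
proof (induction n)
  case 0
  then show ?case by simp
next
  case (Suc n)
  show ?case
  proof (cases "n = 0")
    case True
    from Suc.prems obtain k where "k \<in> B"
      by fastforce
    then show ?thesis
      using True card_le[of k] by (intro exI[of _ "{k}"]) auto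
  next
    case False
    with Suc obtain S where S: "S \<subseteq> B" "card S = n"
        and IH: "card (\<Union>k\<in>S. R k) + n \<le> v * n + 1"
      by auto
    have "finite S"
      using S(1) \<open>finite B\<close> finite_subset by blast
    have "S \<noteq> {}" "S \<noteq> B"
      using S False Suc.prems by auto
    with conn S(1) obtain k where k: "k \<in> B - S" "R k \<inter> (\<Union>j\<in>S. R j) \<noteq> {}"
      by (rule overlap_connectedE)
    have "finite (\<Union>j\<in>S. R j)"
      using \<open>finite S\<close> S(1) fin by blast
    with k fin have "card (R k \<union> (\<Union>j\<in>S. R j)) + 1 \<le> card (R k) + card (\<Union>j\<in>S. R j)"
      by (intro card_Un_le_if_meets) auto
    moreover have "(\<Union>j\<in>insert k S. R j) = R k \<union> (\<Union>j\<in>S. R j)"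
      by simp
    moreover have "card (insert k S) = Suc n"
      using k \<open>finite S\<close> S(2) by simp
    ultimately show ?thesis
      using IH card_le[of k] k S(1) by (intro exI[of _ "insert k S"]) auto
  qed
qed

lemma card_UN_overlap_connected_le:
  assumes "overlap_connected R B" "finite B"
    and "\<And>k. k \<in> B \<Longrightarrow> finite (R k)" "\<And>k. k \<in> B \<Longrightarrow> card (R k) \<le> v"
  shows "card (\<Union>k\<in>B. R k) + card B \<le> v * card B + 1"
proof (cases "B = {}")
  case False
  then have "1 \<le> card B"
    using \<open>finite B\<close> by (simp add: Suc_le_eq card_gt_0_iff)
  with card_UN_overlap_connected_grow[OF assms] obtain S where
    "S \<subseteq> B" "card S = card B" "card (\<Union>k\<in>S. R k) + card B \<le> v * card B + 1"
    by blast
  moreover from this have "S = B"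
    using \<open>finite B\<close> card_subset_eq by blast
  ultimately show ?thesis by simp
qed simp

definition T_rows_of_Vrow :: "(dpos \<Rightarrow> nat \<times> nat) \<Rightarrow> nat \<Rightarrow> nat \<Rightarrow> nat set" where
  "T_rows_of_Vrow \<phi> v k = Vrow_in_T \<phi> k ` {..<v}"

lemma card_T_rows_of_Vrow_le: "card (T_rows_of_Vrow \<phi> v k) \<le> v"
  unfolding T_rows_of_Vrow_def using card_image_le[of "{..<v}"] by simp

lemma TV_pair_iff:
  "TV_pair m mV v \<phi> A B \<longleftrightarrow>
     A \<subseteq> {..<m} \<and> B \<subseteq> {..<mV} \<and> A = (\<Union>k\<in>B. T_rows_of_Vrow \<phi> v k)"
  unfolding TV_pair_def T_rows_of_Vrow_def by (auto 0 4)

lemma TV_pair_restrict: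
  assumes "TV_pair m mV v \<phi> A B" "S \<subseteq> B"
  shows "TV_pair m mV v \<phi> (\<Union>k\<in>S. T_rows_of_Vrow \<phi> v k) S"
  using assms unfolding TV_pair_iff by auto

lemma inseparable_overlap_connected:
  assumes "inseparable m mV v \<phi> A B"
  shows "overlap_connected (T_rows_of_Vrow \<phi> v) B"
  unfolding overlap_connected_def
proof (intro allI impI)
  fix S
  define A1 where "A1 = (\<Union>k\<in>S. T_rows_of_Vrow \<phi> v k)"
  define A2 where "A2 = (\<Union>k\<in>B - S. T_rows_of_Vrow \<phi> v k)"
  assume "S \<subseteq> B" and "A1 \<inter> A2 = {}"
  have tv: "TV_pair m mV v \<phi> A B"
    using assms unfolding inseparable_def by blast
  then have "A1 \<union> A2 = A"
    using \<open>S \<subseteq> B\<close> unfolding TV_pair_iff A1_def A2_def by auto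
  moreover have "TV_pair m mV v \<phi> A1 S" "TV_pair m mV v \<phi> A2 (B - S)"
    using tv \<open>S \<subseteq> B\<close> unfolding A1_def A2_def by (auto intro: TV_pair_restrict)
  moreover have "S \<inter> (B - S) = {}" "S \<union> (B - S) = B"
    using \<open>S \<subseteq> B\<close> by auto
  ultimately have "(A1, S) = ({}, {}) \<or> (A2, B - S) = ({}, {})"
    using assms \<open>A1 \<inter> A2 = {}\<close> unfolding inseparable_def by blast
  then show "S = {} \<or> S = B"
    using \<open>S \<subseteq> B\<close> by auto
qed

theorem lemma3:
  fixes T :: "nat \<Rightarrow> nat \<Rightarrow> real" and U :: "nat \<Rightarrow> nat \<Rightarrow> nat \<Rightarrow> real"
    and V :: "nat \<Rightarrow> nat \<Rightarrow> real" and \<phi> :: "dpos \<Rightarrow> nat \<times> nat"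
  assumes "feasible m n t T p mU nU sU U mV v s V"
    and "value_bij m n T p mU nU U mV v V \<phi>"
    and "inseparable m mV v \<phi> A B"
  shows "int (card A) \<le> (int v - 1) * int (card B) + 1"
proof -
  have "TV_pair m mV v \<phi> A B"
    using assms(3) unfolding inseparable_def by blast
  then have A: "A = (\<Union>k\<in>B. T_rows_of_Vrow \<phi> v k)" and "finite B"
    unfolding TV_pair_iff by (auto intro: finite_subset)
  have "card A + card B \<le> v * card B + 1"
    unfolding A
    using inseparable_overlap_connected[OF assms(3)] \<open>finite B\<close>
    by (rule card_UN_overlap_connected_le) (simp add: T_rows_of_Vrow_def, rule card_T_rows_of_Vrow_le)
  then have "int (card A) + int (card B) \<le> int v * int (card B) + 1"
    by (metis of_nat_add of_nat_le_iff of_nat_mult of_nat_1)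
  then show ?thesis
    by (simp add: algebra_simps)
qed

end
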